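(* Let $\sigma=(1\,2\,\cdots\,n)\in S_n$. Let $\mathcal{C}$ be a chain of the Greene–Kleitman symmetric chain decomposition of $B_n$ and let $X\in\mathcal{C}$ with $|X|\le\lfloor n/2\rfloor$. Then $(\sigma(X))^*=\sigma(X^* )$. Consequently $(\sigma^j(X))^*=\sigma^j(X^* )$ for all integers $j$, and hence $(\rho(X))^*=\rho(X^* )$ for all $\rho\in\langle\sigma\rangle$.
   Context: Greene–Kleitman SCD of $B_n$: for $A\subseteq[n]$, process $k=1,2,\dots,n$ in order; if $k\in A$ and there is some $j<k$ with $j\notin A$ and $j$ not yet paired, let $p_A(k)$ be the largest such $j$, and say $p_A(k)$ and $k$ are paired. Let $R(A)$ be the set of $k$ for which $p_A(k)$ is defined, $L(A)=\{p_A(k):k\in R(A)\}$, and write $[n]\setminus(R(A)\cup L(A))=\{a_1<a_2<\dots<a_s\}$. The chain of $A$ is $\mathcal{C}(A)=\{X\subseteq[n]: R(X)=R(A)\}$, which equals $R(A)\subset R(A)\cup\{a_1\}\subset R(A)\cup\{a_1,a_2\}\subset\dots\subset R(A)\cup\{a_1,\dots,a_s\}=[n]\setminus L(A)$. The distinct sets $\mathcal{C}(A)$, $A\in B_n$, form a partition of $B_n$ into symmetric chains (the Greene–Kleitman SCD). For a chain $\mathcal{C}$ of this decomposition and $X\in\mathcal{C}$ with $|X|\le\lfloor n/2\rfloor$, $X^*$ denotes the unique member of $\mathcal{C}$ with $|X^*|=n-|X|$. In $(\sigma(X))^*$, the star is taken in the chain containing $\sigma(X)$. *)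

theory Defs
  imports Main
begin

text \<open>The state after
processing 1..k is (U, R): U = elements j \<le> k, j \<notin> A, not yet paired;
R = elements k' \<le> k that got paired (the set R(A) restricted to 1..k).\<close>

fun gk_state :: "nat set \<Rightarrow> nat \<Rightarrow> nat set \<times> nat set" where
  "gk_state A 0 = ({}, {})"
| "gk_state A (Suc k) =
     (let (U, R) = gk_state A k in
      if Suc k \<notin> A then (insert (Suc k) U, R)
      else if U \<noteq> {} then (U - {Max U}, insert (Suc k) R)
      else (U, R))"

definition gk_R :: "nat \<Rightarrow> nat set \<Rightarrow> nat set" where
  "gk_R n A = snd (gk_state A n)"

definition gk_chain :: "nat \<Rightarrow> nat set \<Rightarrow> nat set set" where
  "gk_chain n A = {X. X \<subseteq> {1..n} \<and> gk_R n X = gk_R n A}"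

definition gk_star :: "nat \<Rightarrow> nat set \<Rightarrow> nat set" where
  "gk_star n X = (THE Y. Y \<in> gk_chain n X \<and> card Y = n - card X)"

definition sigma :: "nat \<Rightarrow> nat \<Rightarrow> nat" where
  "sigma n i = (if i = n then 1 else i + 1)"

definition sigma_pow :: "nat \<Rightarrow> int \<Rightarrow> nat \<Rightarrow> nat" where
  "sigma_pow n j = (if 0 \<le> j then sigma n ^^ nat j
                    else inv_into {1..n} (sigma n) ^^ nat (- j))"

end

theory Submission
  imports Defs
begin

(* Read A \<subseteq> [n] as a lattice walk: step p goes down if p \<in> A and up
   otherwise.  Then the Greene--Kleitman pairing is bracket matching, so the number of
   unpaired non-members after step k is the height of the walk above its running minimum,
   and R(A) consists of the members of A met while this number is positive.

   (1) R(A) determines a chain, and a chain contains at most one set of each size; hence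
       X^* is the unique subset of [n] of size n - |X| with the same R-set as X.
   (2) For |X| \<le> n/2 we exhibit this set explicitly as X \<union> D(X), where D(X) is cut out by
       prefix and suffix minima of the walk of X.
   (3) D(X) equals the set of positions k from which every cyclic walk k, k+1, ... of length
       1..n (indices mod n) has positive sum.  This description is visibly invariant under
       the rotation \<sigma>, so X^* = X \<union> D(X) commutes with \<sigma>.
   (4) Bijections of [n] that commute with the star operation on sets of size \<le> n/2 are
       closed under composition and inverse, which yields all integer powers of \<sigma>. *)


section \<open>The pairing process as a lattice walk\<close>

definition walk_step :: "nat set \<Rightarrow> nat \<Rightarrow> int" where
  "walk_step A p = (if p \<in> A then -1 else 1)"

fun height :: "nat set \<Rightarrow> nat \<Rightarrow> int" where
  "height A 0 = 0"
| "height A (Suc m) = height A m + walk_step A (Suc m)"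

text \<open>Number of non-members among 1..k that are still unpaired after processing 1..k.\<close>
fun unpaired :: "nat set \<Rightarrow> nat \<Rightarrow> nat" where
  "unpaired A 0 = 0"
| "unpaired A (Suc k) = (if Suc k \<in> A then unpaired A k - 1 else Suc (unpaired A k))"

lemma gk_state_invariant:
  "fst (gk_state A k) \<subseteq> {1..k} \<and> card (fst (gk_state A k)) = unpaired A k
   \<and> snd (gk_state A k) = {j\<in>{1..k}. j \<in> A \<and> 0 < unpaired A (j - 1)}"
proof (induction k)
  case 0
  then show ?case by simp
next
  case (Suc k)
  obtain U R where UR: "gk_state A k = (U, R)" by fastforce
  from Suc UR have U_sub: "U \<subseteq> {1..k}" and U_card: "card U = unpaired A k"
    and R_eq: "R = {j\<in>{1..k}. j \<in> A \<and> 0 < unpaired A (j - 1)}" by auto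
  have fin: "finite U" using U_sub finite_subset by blast
  have R_Suc: "{j\<in>{1..Suc k}. j \<in> A \<and> 0 < unpaired A (j - 1)} =
     (if Suc k \<in> A \<and> 0 < unpaired A k then insert (Suc k) R else R)"
    using R_eq by (auto simp: le_Suc_eq)
  show ?case
  proof (cases "Suc k \<in> A")
    case False
    have "Suc k \<notin> U" using U_sub by auto
    then show ?thesis using False UR U_sub U_card fin R_Suc by auto
  next
    case True
    show ?thesis
    proof (cases "U = {}")
      case False
      have "card (U - {Max U}) = card U - 1" using False fin by simp
      moreover have "0 < unpaired A k" using U_card False fin by (metis card_gt_0_iff)
      ultimately show ?thesis using True False UR U_sub U_card R_Suc by auto
    next
      case U_empty: True
      then have "unpaired A k = 0" using U_card by simp
      then show ?thesis using True U_empty UR R_Suc by auto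
    qed
  qed
qed

lemma gk_R_char: "gk_R n A = {j\<in>{1..n}. j \<in> A \<and> 0 < unpaired A (j - 1)}"
  unfolding gk_R_def using gk_state_invariant by blast

lemma height_card: "height X m = int m - 2 * int (card (X \<inter> {1..m}))"
proof (induction m)
  case 0
  then show ?case by simp
next
  case (Suc m)
  show ?case
  proof (cases "Suc m \<in> X")
    case True
    have "X \<inter> {1..Suc m} = insert (Suc m) (X \<inter> {1..m})" using True by (auto simp: le_Suc_eq)
    then show ?thesis using Suc True by (simp add: walk_step_def)
  next
    case False
    have "X \<inter> {1..Suc m} = X \<inter> {1..m}" using False by (auto simp: le_Suc_eq)
    then show ?thesis using Suc False by (simp add: walk_step_def)
  qed
qed

lemma height_Suc_cases: "height A (Suc m) = height A m + 1 \<or> height A (Suc m) = height A m - 1"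
  by (simp add: walk_step_def)


section \<open>Prefix and suffix minima of the walk\<close>

definition prefix_min :: "nat set \<Rightarrow> nat \<Rightarrow> int" where
  "prefix_min A k = Min (height A ` {0..k})"

definition suffix_min :: "nat \<Rightarrow> nat set \<Rightarrow> nat \<Rightarrow> int" where
  "suffix_min n A m = Min (height A ` {m..n})"

lemma prefix_min_Suc: "prefix_min A (Suc k) = min (prefix_min A k) (height A (Suc k))"
proof -
  have "{0..Suc k} = insert (Suc k) {0..k}" by auto
  then show ?thesis unfolding prefix_min_def by (simp add: min.commute)
qed

lemma prefix_min_le: "j \<le> k \<Longrightarrow> prefix_min A k \<le> height A j"
  unfolding prefix_min_def by (rule Min_le) auto

lemma prefix_min_attained: "\<exists>j\<le>k. prefix_min A k = height A j"
proof -
  have "prefix_min A k \<in> height A ` {0..k}" unfolding prefix_min_def by (rule Min_in) auto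
  then show ?thesis by auto
qed

lemma suffix_min_le: "m \<le> j \<Longrightarrow> j \<le> n \<Longrightarrow> suffix_min n A m \<le> height A j"
  unfolding suffix_min_def by (rule Min_le) auto

lemma suffix_min_attained: "m \<le> n \<Longrightarrow> \<exists>j. m \<le> j \<and> j \<le> n \<and> suffix_min n A m = height A j"
proof -
  assume "m \<le> n"
  then have "suffix_min n A m \<in> height A ` {m..n}" unfolding suffix_min_def by (intro Min_in) auto
  then show ?thesis by auto
qed

lemma suffix_min_step: "m < n \<Longrightarrow> suffix_min n A m = min (height A m) (suffix_min n A (Suc m))"
proof -
  assume "m < n"
  then have "{m..n} = insert m {Suc m..n}" by auto
  then show ?thesis unfolding suffix_min_def using \<open>m < n\<close> by simp
qed

lemma suffix_min_0: "suffix_min n A 0 = prefix_min A n"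
  unfolding suffix_min_def prefix_min_def by simp

lemma prefix_min_split: "m < n \<Longrightarrow> prefix_min A n = min (prefix_min A m) (suffix_min n A (Suc m))"
proof -
  assume "m < n"
  then have "{0..n} = {0..m} \<union> {Suc m..n}" by auto
  moreover have "{Suc m..n} \<noteq> {}" using \<open>m < n\<close> by simp
  ultimately show ?thesis unfolding prefix_min_def suffix_min_def
    by (simp add: image_Un Min_Un)
qed

lemma unpaired_height: "int (unpaired A k) = height A k - prefix_min A k"
proof (induction k)
  case 0
  then show ?case by (simp add: prefix_min_def)
next
  case (Suc k)
  have "prefix_min A k \<le> height A k" by (rule prefix_min_le) simp
  then show ?case using Suc by (auto simp: prefix_min_Suc walk_step_def min_def)
qed

lemma record_step:
  assumes "m < n" and "height X m < suffix_min n X (Suc m)"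
  shows "suffix_min n X m = height X m" and "suffix_min n X (Suc m) = height X m + 1"
    and "prefix_min X n = prefix_min X m"
proof -
  show "suffix_min n X m = height X m" using suffix_min_step[OF assms(1)] assms(2) by simp
  have "suffix_min n X (Suc m) \<le> height X (Suc m)" using assms(1) by (intro suffix_min_le) auto
  then show "suffix_min n X (Suc m) = height X m + 1" using height_Suc_cases[of X m] assms(2) by auto
  have "prefix_min X m \<le> height X m" by (rule prefix_min_le) simp
  then show "prefix_min X n = prefix_min X m" using prefix_min_split[OF assms(1)] assms(2) by simp
qed


section \<open>A chain contains at most one set of each size\<close>

text \<open>Comparison of two sets on the prefix 1..k: Z is contained in Y there, and every
  extra member of Y has used up one unpaired non-member more than Z has.\<close>
definition nested_upto :: "nat set \<Rightarrow> nat set \<Rightarrow> nat \<Rightarrow> bool" where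
  "nested_upto Z Y k \<longleftrightarrow>
     Z \<inter> {1..k} \<subseteq> Y \<and> unpaired Z k = unpaired Y k + card (Y \<inter> {1..k} - Z)"

definition same_pairing :: "nat set \<Rightarrow> nat set \<Rightarrow> nat \<Rightarrow> bool" where
  "same_pairing Y Z k \<longleftrightarrow> (Suc k \<in> Y \<and> 0 < unpaired Y k) = (Suc k \<in> Z \<and> 0 < unpaired Z k)"

lemma nested_upto_Suc:
  assumes nest: "nested_upto Z Y k" and same: "same_pairing Y Z k"
    and not_swap: "Suc k \<in> Z \<longrightarrow> Suc k \<in> Y"
  shows "nested_upto Z Y (Suc k)"
proof -
  let ?c = "card (Y \<inter> {1..k} - Z)"
  have inc: "Z \<inter> {1..k} \<subseteq> Y" and eq: "unpaired Z k = unpaired Y k + ?c"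
    using nest unfolding nested_upto_def by auto
  consider (both) "Suc k \<in> Y" "Suc k \<in> Z" | (only_Y) "Suc k \<in> Y" "Suc k \<notin> Z"
    | (neither) "Suc k \<notin> Y" "Suc k \<notin> Z" using not_swap by blast
  then show ?thesis
  proof cases
    case both
    have diff: "Y \<inter> {1..Suc k} - Z = Y \<inter> {1..k} - Z" using both by (auto simp: le_Suc_eq)
    have "unpaired Z (Suc k) = unpaired Y (Suc k) + ?c"
    proof (cases "?c = 0")
      case True
      have "unpaired Z (Suc k) = unpaired Z k - 1" "unpaired Y (Suc k) = unpaired Y k - 1"
        using both by simp_all
      then show ?thesis using eq True by arith
    next
      case False
      have "(0 < unpaired Y k) = (0 < unpaired Z k)" using same both unfolding same_pairing_def by simp
      then have "0 < unpaired Y k" using eq False by arith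
      then show ?thesis using eq both by simp
    qed
    then show ?thesis using inc both diff unfolding nested_upto_def by (auto simp: le_Suc_eq)
  next
    case only_Y
    have diff: "Y \<inter> {1..Suc k} - Z = insert (Suc k) (Y \<inter> {1..k} - Z)"
      using only_Y by (auto simp: le_Suc_eq)
    have "unpaired Y k = 0" using same only_Y unfolding same_pairing_def by simp
    then show ?thesis using inc eq only_Y diff unfolding nested_upto_def by (auto simp: le_Suc_eq)
  next
    case neither
    have "Y \<inter> {1..Suc k} - Z = Y \<inter> {1..k} - Z" using neither by (auto simp: le_Suc_eq)
    then show ?thesis using inc eq neither unfolding nested_upto_def by (auto simp: le_Suc_eq)
  qed
qed

lemma nested_upto_Suc_swap:
  assumes nest: "nested_upto Z Y k" and same: "same_pairing Y Z k"
    and swap: "Suc k \<in> Z" "Suc k \<notin> Y"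
  shows "nested_upto Y Z (Suc k)"
proof -
  have inc: "Z \<inter> {1..k} \<subseteq> Y"
    and eq: "unpaired Z k = unpaired Y k + card (Y \<inter> {1..k} - Z)"
    using nest unfolding nested_upto_def by auto
  have Z0: "unpaired Z k = 0" using same swap unfolding same_pairing_def by simp
  then have Y0: "unpaired Y k = 0" and "Y \<inter> {1..k} - Z = {}" using eq by auto
  then have "Y \<inter> {1..Suc k} \<subseteq> Z" and "Z \<inter> {1..Suc k} - Y = {Suc k}"
    using inc swap by (auto simp: le_Suc_eq)
  then show ?thesis using Y0 Z0 swap unfolding nested_upto_def by simp
qed

text \<open>Two subsets of [n] with the same R-set are comparable, so equal if equinumerous.\<close>
lemma gk_R_card_unique:
  assumes Y: "Y \<subseteq> {1..n}" and Z: "Z \<subseteq> {1..n}" and R: "gk_R n Y = gk_R n Z"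
    and card_eq: "card Y = card Z"
  shows "Y = Z"
proof -
  have same: "same_pairing Y Z k" if "Suc k \<le> n" for k
  proof -
    have "Suc k \<in> gk_R n Y \<longleftrightarrow> Suc k \<in> gk_R n Z" using R by simp
    then show ?thesis using that unfolding gk_R_char same_pairing_def by auto
  qed
  have nested: "nested_upto Z Y k \<or> nested_upto Y Z k" if "k \<le> n" for k
    using that
  proof (induction k)
    case 0
    then show ?case by (simp add: nested_upto_def)
  next
    case (Suc k)
    have sYZ: "same_pairing Y Z k" and sZY: "same_pairing Z Y k"
      using same Suc.prems unfolding same_pairing_def by auto
    show ?case
      using Suc nested_upto_Suc[OF _ sYZ] nested_upto_Suc[OF _ sZY]
        nested_upto_Suc_swap[OF _ sYZ] nested_upto_Suc_swap[OF _ sZY] by fastforce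
  qed
  from nested[of n] have "Z \<subseteq> Y \<or> Y \<subseteq> Z" using Y Z unfolding nested_upto_def by blast
  moreover have "finite Y" "finite Z" using Y Z finite_subset by auto
  ultimately show ?thesis using card_eq by (metis card_subset_eq)
qed


section \<open>An explicit formula for the top of a chain\<close>

text \<open>For |X| \<le> n/2 the positions to add to X are the free positions of X (non-members
  that are never paired: the walk stays strictly above its level before them) which are
  preceded by fewer than height X n other free positions.\<close>
definition added :: "nat \<Rightarrow> nat set \<Rightarrow> nat set" where
  "added n X = {k\<in>{1..n}. height X (k - 1) < suffix_min n X k
                       \<and> height X (k - 1) - prefix_min X (k - 1) < height X n}"

lemma added_Suc:
  "Suc m \<in> added n X \<longleftrightarrow> Suc m \<le> n \<and> height X m < suffix_min n X (Suc m)
                              \<and> height X m - prefix_min X m < height X n"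
  unfolding added_def by auto

lemma added_subset: "added n X \<subseteq> {1..n}"
  unfolding added_def by auto

lemma added_disjoint: "added n X \<inter> X = {}"
proof (rule ccontr)
  assume "added n X \<inter> X \<noteq> {}"
  then obtain k where k: "k \<in> added n X" "k \<in> X" by blast
  then obtain m where m: "k = Suc m" unfolding added_def by (cases k) auto
  have "height X m < suffix_min n X (Suc m)" "Suc m \<le> n" using k m added_Suc by auto
  moreover have "suffix_min n X (Suc m) \<le> height X (Suc m)" using calculation by (intro suffix_min_le) auto
  ultimately show False using k m by (simp add: walk_step_def)
qed

lemma card_added_upto:
  assumes nonneg: "0 \<le> height X n" and "m \<le> n"
  shows "int (card (added n X \<inter> {1..m})) = min (height X n) (suffix_min n X m - prefix_min X n)"
  using \<open>m \<le> n\<close>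
proof (induction m)
  case 0
  then show ?case using nonneg by (simp add: suffix_min_0)
next
  case (Suc m)
  then have m_less: "m < n" by simp
  have IH: "int (card (added n X \<inter> {1..m})) = min (height X n) (suffix_min n X m - prefix_min X n)"
    using Suc by simp
  show ?case
  proof (cases "height X m < suffix_min n X (Suc m)")
    case True
    note at_record = record_step[OF m_less True]
    show ?thesis
    proof (cases "height X m - prefix_min X m < height X n")
      case True2: True
      have "Suc m \<in> added n X" using added_Suc Suc.prems True True2 by simp
      then have "added n X \<inter> {1..Suc m} = insert (Suc m) (added n X \<inter> {1..m})"
        by (auto simp: le_Suc_eq)
      then show ?thesis using IH at_record True2 by simp
    next
      case False
      have "Suc m \<notin> added n X" using added_Suc False by simp
      then have "added n X \<inter> {1..Suc m} = added n X \<inter> {1..m}" by (auto simp: le_Suc_eq)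
      then show ?thesis using IH at_record False by simp
    qed
  next
    case False
    have "suffix_min n X m = suffix_min n X (Suc m)" using suffix_min_step[OF m_less] False by simp
    moreover have "Suc m \<notin> added n X" using added_Suc False by simp
    then have "added n X \<inter> {1..Suc m} = added n X \<inter> {1..m}" by (auto simp: le_Suc_eq)
    ultimately show ?thesis using IH by simp
  qed
qed

lemma card_added_before_added:
  assumes nonneg: "0 \<le> height X n" and k: "Suc m \<in> added n X"
  shows "card (added n X \<inter> {1..m}) = unpaired X m"
proof -
  have a: "m < n" "height X m < suffix_min n X (Suc m)" "height X m - prefix_min X m < height X n"
    using k added_Suc by auto
  note at_record = record_step[OF a(1,2)]
  have "int (card (added n X \<inter> {1..m})) = height X m - prefix_min X m"
    using card_added_upto[OF nonneg, of m] a at_record by simp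
  then show ?thesis using unpaired_height[of X m] by simp
qed

lemma card_added_before_member:
  assumes nonneg: "0 \<le> height X n" and k: "Suc m \<in> X" "Suc m \<le> n"
    and pos: "0 < card (added n X \<inter> {1..m})"
  shows "card (added n X \<inter> {1..m}) < unpaired X m"
proof -
  have m_less: "m < n" using k by simp
  have count: "int (card (added n X \<inter> {1..m})) = min (height X n) (suffix_min n X m - prefix_min X n)"
    using card_added_upto[OF nonneg, of m] m_less by simp
  then have gt: "prefix_min X n < suffix_min n X m" using pos by linarith
  have "suffix_min n X m \<le> height X (Suc m)" using m_less by (intro suffix_min_le) auto
  then have below: "suffix_min n X m \<le> height X m - 1" using k by (simp add: walk_step_def)
  have "suffix_min n X m \<le> suffix_min n X (Suc m)" using suffix_min_step[OF m_less] by simp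
  then have "prefix_min X n = prefix_min X m" using prefix_min_split[OF m_less, of X] gt by linarith
  then show ?thesis using count below unpaired_height[of X m] by linarith
qed

lemma unpaired_union_added:
  assumes nonneg: "0 \<le> height X n" and "m \<le> n"
  shows "unpaired X m = unpaired (X \<union> added n X) m + card (added n X \<inter> {1..m})"
  using \<open>m \<le> n\<close>
proof (induction m)
  case 0
  then show ?case by simp
next
  case (Suc m)
  let ?Y = "X \<union> added n X" and ?c = "card (added n X \<inter> {1..m})"
  have IH: "unpaired X m = unpaired ?Y m + ?c" using Suc by simp
  show ?case
  proof (cases "Suc m \<in> added n X")
    case True
    have "Suc m \<notin> X" using True added_disjoint by blast
    moreover have "unpaired ?Y m = 0" using IH card_added_before_added[OF nonneg True] by simp
    moreover have "added n X \<inter> {1..Suc m} = insert (Suc m) (added n X \<inter> {1..m})"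
      using True by (auto simp: le_Suc_eq)
    ultimately show ?thesis using IH True by simp
  next
    case False
    have same: "added n X \<inter> {1..Suc m} = added n X \<inter> {1..m}" using False by (auto simp: le_Suc_eq)
    have "?c = 0 \<or> ?c < unpaired X m" if "Suc m \<in> X"
      using card_added_before_member[OF nonneg that Suc.prems] by (metis gr0I)
    then show ?thesis using IH False same by auto
  qed
qed

lemma gk_R_union_added:
  assumes nonneg: "0 \<le> height X n"
  shows "gk_R n (X \<union> added n X) = gk_R n X"
proof -
  have "(Suc m \<in> X \<union> added n X \<and> 0 < unpaired (X \<union> added n X) m)
          = (Suc m \<in> X \<and> 0 < unpaired X m)" if "Suc m \<le> n" for m
  proof -
    have count: "unpaired X m = unpaired (X \<union> added n X) m + card (added n X \<inter> {1..m})"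
      using unpaired_union_added[OF nonneg, of m] that by simp
    show ?thesis
    proof (cases "Suc m \<in> added n X")
      case True
      then show ?thesis using count card_added_before_added[OF nonneg True] added_disjoint by auto
    next
      case False
      have "card (added n X \<inter> {1..m}) = 0 \<or> card (added n X \<inter> {1..m}) < unpaired X m"
        if "Suc m \<in> X" using card_added_before_member[OF nonneg that \<open>Suc m \<le> n\<close>] by (metis gr0I)
      then show ?thesis using count False by auto
    qed
  qed
  then show ?thesis unfolding gk_R_char
    by (auto simp: Suc_le_eq) (metis Suc_pred not_le not_less_eq_eq)+
qed

lemma card_union_added:
  assumes X: "X \<subseteq> {1..n}" and half: "2 * card X \<le> n"
  shows "card (X \<union> added n X) = n - card X"
proof -
  have height_n: "height X n = int n - 2 * int (card X)"
    using height_card[of X n] X by (simp add: Int_absorb2)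
  then have nonneg: "0 \<le> height X n" using half by simp
  have "prefix_min X n \<le> 0" using prefix_min_le[of 0 n X] by simp
  then have "int (card (added n X)) = height X n"
    using card_added_upto[OF nonneg, of n] added_subset[of n X]
    by (simp add: Int_absorb2 suffix_min_def)
  moreover have "card (X \<union> added n X) = card X + card (added n X)"
    using X added_subset[of n X] added_disjoint[of n X]
    by (subst card_Un_disjoint) (auto simp: finite_subset)
  ultimately show ?thesis using height_n half by simp
qed

lemma gk_star_eq_union_added:
  assumes X: "X \<subseteq> {1..n}" and half: "2 * card X \<le> n"
  shows "gk_star n X = X \<union> added n X"
proof -
  let ?S = "X \<union> added n X"
  have "height X n = int n - 2 * int (card X)"
    using height_card[of X n] X by (simp add: Int_absorb2)
  then have R_eq: "gk_R n ?S = gk_R n X" using gk_R_union_added half by simp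
  have S_sub: "?S \<subseteq> {1..n}" using X added_subset by auto
  show ?thesis unfolding gk_star_def
  proof (rule the_equality)
    show "?S \<in> gk_chain n X \<and> card ?S = n - card X"
      using S_sub R_eq card_union_added[OF X half] unfolding gk_chain_def by auto
  next
    fix Y assume "Y \<in> gk_chain n X \<and> card Y = n - card X"
    then show "Y = ?S" using gk_R_card_unique[OF _ S_sub] R_eq card_union_added[OF X half]
      unfolding gk_chain_def by auto
  qed
qed


section \<open>A rotation-invariant description of the added positions\<close>

definition cyc_shift :: "nat \<Rightarrow> nat \<Rightarrow> nat \<Rightarrow> nat" where
  "cyc_shift n k t = (k - 1 + t) mod n + 1"

definition cyclic_positive :: "nat \<Rightarrow> nat set \<Rightarrow> nat set" where
  "cyclic_positive n X =
     {k\<in>{1..n}. \<forall>L\<in>{1..n}. 0 < (\<Sum>t<L. walk_step X (cyc_shift n k t))}"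

lemma cyclic_walk_sum:
  assumes j: "Suc j \<le> n" and L: "L \<le> n"
  shows "(\<Sum>t<L. walk_step X (cyc_shift n (Suc j) t)) =
          (if j + L \<le> n then height X (j + L) - height X j
           else height X n - height X j + height X (j + L - n))"
  using L
proof (induction L)
  case 0
  then show ?case using j by simp
next
  case (Suc L)
  have IH: "(\<Sum>t<L. walk_step X (cyc_shift n (Suc j) t)) =
          (if j + L \<le> n then height X (j + L) - height X j
           else height X n - height X j + height X (j + L - n))" using Suc by simp
  have L_less: "L < n" using Suc by simp
  consider (before) "j + L < n" | (wrap) "j + L = n" | (after) "n < j + L" by linarith
  then show ?case
  proof cases
    case before
    then have "cyc_shift n (Suc j) L = Suc (j + L)" unfolding cyc_shift_def by simp
    then show ?thesis using IH before by simp
  next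
    case wrap
    then have "cyc_shift n (Suc j) L = 1" and "j + Suc L - n = Suc 0"
      unfolding cyc_shift_def by simp_all
    then show ?thesis using IH wrap by simp
  next
    case after
    have "(j + L) mod n = j + L - n" using after j L_less by (simp add: le_mod_geq)
    then have "cyc_shift n (Suc j) L = Suc (j + L - n)" unfolding cyc_shift_def by simp
    moreover have "j + Suc L - n = Suc (j + L - n)" using after by simp
    ultimately show ?thesis using IH after by simp
  qed
qed

lemma cyclic_positive_imp_added:
  assumes k: "k \<in> cyclic_positive n X"
  shows "k \<in> added n X"
proof -
  obtain j where kj: "k = Suc j" "Suc j \<le> n" using k unfolding cyclic_positive_def by (cases k) auto
  have pos: "0 < (if j + L \<le> n then height X (j + L) - height X j
                  else height X n - height X j + height X (j + L - n))"
    if "1 \<le> L" "L \<le> n" for L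
    using k kj that cyclic_walk_sum[OF kj(2)] unfolding cyclic_positive_def by auto
  obtain m where m: "Suc j \<le> m" "m \<le> n" "suffix_min n X (Suc j) = height X m"
    using suffix_min_attained kj by blast
  have suffix: "height X j < suffix_min n X (Suc j)" using pos[of "m - j"] m by simp
  have total: "height X j < height X n" using pos[of "n - j"] kj by simp
  obtain i where i: "i \<le> j" "prefix_min X j = height X i" using prefix_min_attained by blast
  have prefix: "height X j - prefix_min X j < height X n"
  proof (cases "i = 0")
    case True
    then show ?thesis using i total by simp
  next
    case False
    have L: "1 \<le> n - j + i" "n - j + i \<le> n" "\<not> j + (n - j + i) \<le> n" "j + (n - j + i) - n = i"
      using False i kj by auto
    show ?thesis using pos[OF L(1,2)] L(3,4) i by simp
  qed
  show ?thesis using suffix prefix kj added_Suc by simp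
qed

lemma added_imp_cyclic_positive:
  assumes k: "k \<in> added n X"
  shows "k \<in> cyclic_positive n X"
proof -
  obtain j where kj: "k = Suc j" "Suc j \<le> n" using k unfolding added_def by (cases k) auto
  have a: "height X j < suffix_min n X (Suc j)" "height X j - prefix_min X j < height X n"
    using k kj added_Suc by auto
  have "0 < (\<Sum>t<L. walk_step X (cyc_shift n (Suc j) t))" if L: "L \<in> {1..n}" for L
  proof (cases "j + L \<le> n")
    case True
    have "suffix_min n X (Suc j) \<le> height X (j + L)" using True L by (intro suffix_min_le) auto
    then show ?thesis using cyclic_walk_sum[OF kj(2), of L] L True a by simp
  next
    case False
    have "prefix_min X j \<le> height X (j + L - n)" using False L by (intro prefix_min_le) auto
    then show ?thesis using cyclic_walk_sum[OF kj(2), of L] L False a by simp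
  qed
  then show ?thesis unfolding cyclic_positive_def using kj by auto
qed

lemma added_eq_cyclic_positive: "added n X = cyclic_positive n X"
  using added_imp_cyclic_positive cyclic_positive_imp_added by blast

lemma sigma_range: "q \<in> {1..n} \<Longrightarrow> sigma n q \<in> {1..n}"
  unfolding sigma_def by auto

lemma bij_sigma: "bij_betw (sigma n) {1..n} {1..n}"
proof (rule bij_betw_imageI)
  show "inj_on (sigma n) {1..n}" unfolding sigma_def inj_on_def by auto
  have "q \<in> sigma n ` {1..n}" if q: "q \<in> {1..n}" for q
  proof (cases "q = 1")
    case True
    then show ?thesis using q unfolding sigma_def by force
  next
    case False
    then have "sigma n (q - 1) = q" "q - 1 \<in> {1..n}" using q unfolding sigma_def by auto
    then show ?thesis by force
  qed
  then show "sigma n ` {1..n} = {1..n}" using sigma_range by blast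
qed

lemma sigma_cyc_shift:
  assumes k: "k \<in> {1..n}"
  shows "sigma n (cyc_shift n k t) = cyc_shift n (sigma n k) t"
proof -
  obtain j where j: "k = Suc j" "j < n" using k by (cases k) auto
  have r: "(j + t) mod n < n" using j by simp
  have lhs: "sigma n (cyc_shift n k t) = Suc ((j + t) mod n) mod n + 1"
  proof (cases "Suc ((j + t) mod n) = n")
    case True
    then show ?thesis unfolding cyc_shift_def sigma_def using j by simp
  next
    case False
    then have "Suc ((j + t) mod n) < n" using r by simp
    then show ?thesis unfolding cyc_shift_def sigma_def using j False by simp
  qed
  have "sigma n k - 1 = Suc j mod n" unfolding sigma_def using j by auto
  then have rhs: "cyc_shift n (sigma n k) t = (Suc j mod n + t) mod n + 1"
    unfolding cyc_shift_def by simp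
  show ?thesis unfolding lhs rhs by (simp add: mod_Suc_eq mod_add_left_eq)
qed

lemma walk_step_sigma:
  assumes "q \<in> {1..n}" and "X \<subseteq> {1..n}"
  shows "walk_step (sigma n ` X) (sigma n q) = walk_step X q"
  using inj_on_image_mem_iff[OF bij_betw_imp_inj_on[OF bij_sigma[of n]] assms]
  unfolding walk_step_def by simp

lemma sigma_mem_cyclic_positive:
  assumes X: "X \<subseteq> {1..n}" and k: "k \<in> {1..n}"
  shows "sigma n k \<in> cyclic_positive n (sigma n ` X) \<longleftrightarrow> k \<in> cyclic_positive n X"
proof -
  have n: "0 < n" using k by simp
  have range: "cyc_shift n k t \<in> {1..n}" for t
    using n unfolding cyc_shift_def by (auto simp: Suc_le_eq)
  have "(\<Sum>t<L. walk_step (sigma n ` X) (cyc_shift n (sigma n k) t))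
        = (\<Sum>t<L. walk_step X (cyc_shift n k t))" for L
    by (rule sum.cong) (auto simp: sigma_cyc_shift[OF k, symmetric] walk_step_sigma[OF range X])
  then show ?thesis unfolding cyclic_positive_def using k sigma_range[OF k] by auto
qed

lemma added_sigma:
  assumes X: "X \<subseteq> {1..n}"
  shows "added n (sigma n ` X) = sigma n ` added n X"
proof -
  have "cyclic_positive n (sigma n ` X) = sigma n ` cyclic_positive n X"
  proof (intro set_eqI iffI)
    fix q assume q: "q \<in> cyclic_positive n (sigma n ` X)"
    then have "q \<in> sigma n ` {1..n}" using bij_sigma unfolding cyclic_positive_def bij_betw_def by auto
    then obtain k where "k \<in> {1..n}" "q = sigma n k" by blast
    then show "q \<in> sigma n ` cyclic_positive n X" using q sigma_mem_cyclic_positive[OF X] by auto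
  next
    fix q assume "q \<in> sigma n ` cyclic_positive n X"
    then show "q \<in> cyclic_positive n (sigma n ` X)"
      using sigma_mem_cyclic_positive[OF X] unfolding cyclic_positive_def by auto
  qed
  then show ?thesis by (simp add: added_eq_cyclic_positive)
qed


section \<open>Bijections of [n] commuting with the star operation\<close>

definition commutes_with_star :: "nat \<Rightarrow> (nat \<Rightarrow> nat) \<Rightarrow> bool" where
  "commutes_with_star n f \<longleftrightarrow> bij_betw f {1..n} {1..n} \<and>
     (\<forall>X. X \<subseteq> {1..n} \<longrightarrow> 2 * card X \<le> n \<longrightarrow> gk_star n (f ` X) = f ` gk_star n X)"

lemma gk_star_subset: "X \<subseteq> {1..n} \<Longrightarrow> 2 * card X \<le> n \<Longrightarrow> gk_star n X \<subseteq> {1..n}"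
  using gk_star_eq_union_added added_subset by blast

lemma bij_image_small:
  assumes f: "bij_betw f {1..n} {1..n}" and X: "X \<subseteq> {1..n}" and half: "2 * card X \<le> n"
  shows "f ` X \<subseteq> {1..n}" and "2 * card (f ` X) \<le> n"
proof -
  show "f ` X \<subseteq> {1..n}" using f X unfolding bij_betw_def by auto
  have "card (f ` X) = card X"
    using f X by (meson bij_betw_imp_inj_on card_image inj_on_subset)
  then show "2 * card (f ` X) \<le> n" using half by simp
qed

lemma commutes_with_star_sigma: "commutes_with_star n (sigma n)"
  unfolding commutes_with_star_def
proof (intro conjI allI impI bij_sigma)
  fix X assume X: "X \<subseteq> {1..n}" and half: "2 * card X \<le> n"
  note small = bij_image_small[OF bij_sigma X half]
  show "gk_star n (sigma n ` X) = sigma n ` gk_star n X"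
    using gk_star_eq_union_added[OF small] gk_star_eq_union_added[OF X half] added_sigma[OF X]
    by (simp add: image_Un)
qed

lemma commutes_with_star_id: "commutes_with_star n id"
  unfolding commutes_with_star_def by simp

lemma commutes_with_star_comp:
  assumes f: "commutes_with_star n f" and g: "commutes_with_star n g"
  shows "commutes_with_star n (f \<circ> g)"
  unfolding commutes_with_star_def
proof (intro conjI allI impI)
  show "bij_betw (f \<circ> g) {1..n} {1..n}"
    using f g unfolding commutes_with_star_def by (metis bij_betw_trans)
  fix X assume X: "X \<subseteq> {1..n}" and half: "2 * card X \<le> n"
  have g_bij: "bij_betw g {1..n} {1..n}" using g unfolding commutes_with_star_def by simp
  note small = bij_image_small[OF g_bij X half]
  have "gk_star n ((f \<circ> g) ` X) = gk_star n (f ` g ` X)" by (simp add: image_comp)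
  also have "\<dots> = f ` gk_star n (g ` X)" using f small unfolding commutes_with_star_def by blast
  also have "\<dots> = f ` g ` gk_star n X" using g X half unfolding commutes_with_star_def by simp
  finally show "gk_star n ((f \<circ> g) ` X) = (f \<circ> g) ` gk_star n X" by (simp add: image_comp)
qed

lemma commutes_with_star_funpow: "commutes_with_star n f \<Longrightarrow> commutes_with_star n (f ^^ m)"
  by (induction m) (auto simp: commutes_with_star_id commutes_with_star_comp)

lemma commutes_with_star_inv:
  assumes f: "commutes_with_star n f"
  shows "commutes_with_star n (inv_into {1..n} f)"
  unfolding commutes_with_star_def
proof (intro conjI allI impI)
  let ?g = "inv_into {1..n} f"
  have f_bij: "bij_betw f {1..n} {1..n}" using f unfolding commutes_with_star_def by simp
  then show g_bij: "bij_betw ?g {1..n} {1..n}" by (rule bij_betw_inv_into)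
  fix X assume X: "X \<subseteq> {1..n}" and half: "2 * card X \<le> n"
  note small = bij_image_small[OF g_bij X half]
  have "f ` ?g ` X = X" using X f_bij by (simp add: bij_betw_def image_inv_into_cancel)
  then have "gk_star n X = f ` gk_star n (?g ` X)" using f small unfolding commutes_with_star_def by metis
  then have "?g ` gk_star n X = ?g ` f ` gk_star n (?g ` X)" by simp
  also have "\<dots> = gk_star n (?g ` X)"
    using f_bij gk_star_subset[OF small] by (simp add: bij_betw_def inv_into_image_cancel)
  finally show "gk_star n (?g ` X) = ?g ` gk_star n X" by simp
qed

lemma commutes_with_star_sigma_pow: "commutes_with_star n (sigma_pow n j)"
  unfolding sigma_pow_def
  using commutes_with_star_funpow commutes_with_star_inv commutes_with_star_sigma by simp


theorem lemma3p1:
  fixes n :: nat and A X :: "nat set"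
  assumes "A \<subseteq> {1..n}"
    and "X \<in> gk_chain n A"
    and "card X \<le> n div 2"
  shows "gk_star n (sigma n ` X) = sigma n ` gk_star n X
       \<and> (\<forall>j::int. gk_star n (sigma_pow n j ` X) = sigma_pow n j ` gk_star n X)
       \<and> (\<forall>\<rho> \<in> range (sigma_pow n). gk_star n (\<rho> ` X) = \<rho> ` gk_star n X)"
proof -
  have X: "X \<subseteq> {1..n}" using assms(2) unfolding gk_chain_def by auto
  have half: "2 * card X \<le> n" using assms(3) by simp
  have "gk_star n (sigma n ` X) = sigma n ` gk_star n X"
    using commutes_with_star_sigma X half unfolding commutes_with_star_def by blast
  moreover have "\<forall>j. gk_star n (sigma_pow n j ` X) = sigma_pow n j ` gk_star n X"
    using commutes_with_star_sigma_pow X half unfolding commutes_with_star_def by blast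
  ultimately show ?thesis by auto
qed

end
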